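(* Let $p,q$ be positive integers with $1<q<p-q$ and $\gcd(p,q)=1$, let $A=\langle q,p-q\rangle$, let $s\in A\setminus\{0\}$, and let $r$ be a positive integer with $1<r<s-r$ and $\gcd(r,s)=1$; put $B=\langle r,s-r\rangle$. Let $M$ be the submonoid of $\mathbb{Q}^+$ generated by all $k/r$ with $k\in A$ and all $\frac{k'}{r}(s/r)^n$ with $k'\in B$, $n\ge1$, and let $(G,G^+)=(M+(-M),M)$. Let $D=\{x\in G^+: x\le_G (s/r)^n \text{ for some } n\ge1\}$. Then $tD\neq G^+$ for every positive integer $t\le r-1$, and $rD=G^+$.
   Context: $\langle a_1,\dots,a_k\rangle$ is the submonoid of $\mathbb{Z}^+$ generated by the $a_i$. $x\le_G y$ means $y-x\in G^+$. An interval in $G^+$ is a nonempty, upward directed, order-hereditary subset of $G^+$. For intervals $X,Y$, $X+Y=\{z\in G^+: z\le x+y,\ x\in X,\ y\in Y\}$; $tX$ is the $t$-fold sum of $X$ with itself. *)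

theory Defs
  imports Complex_Main
begin

inductive_set gen_monoid :: "'a::monoid_add set \<Rightarrow> 'a set" for S where
  zero: "0 \<in> gen_monoid S"
| gen: "x \<in> S \<Longrightarrow> x \<in> gen_monoid S"
| add: "x \<in> gen_monoid S \<Longrightarrow> y \<in> gen_monoid S \<Longrightarrow> x + y \<in> gen_monoid S"

definition leG :: "'a::ab_group_add set \<Rightarrow> 'a \<Rightarrow> 'a \<Rightarrow> bool" where
  "leG P x y \<longleftrightarrow> y - x \<in> P"

text \<open>Sum of intervals X, Y in the positive cone P.\<close>
definition int_sum :: "'a::ab_group_add set \<Rightarrow> 'a set \<Rightarrow> 'a set \<Rightarrow> 'a set" where
  "int_sum P X Y = {z \<in> P. \<exists>x\<in>X. \<exists>y\<in>Y. leG P z (x + y)}"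

text \<open>t-fold sum tX (meaningful for t \<ge> 1; the case t = 0 is never used).\<close>
fun int_mult :: "'a::ab_group_add set \<Rightarrow> nat \<Rightarrow> 'a set \<Rightarrow> 'a set" where
  "int_mult P 0 X = {0}"
| "int_mult P (Suc 0) X = X"
| "int_mult P (Suc (Suc n)) X = int_sum P (int_mult P (Suc n) X) X"

end

theory Submission
  imports Defs
begin

text \<open>
  Write \<open>\<rho> = s / r\<close>. Every x in M has an expansion \<open>r x = d\<^sub>0 + d\<^sub>1 \<rho> + ... + d\<^sub>L \<rho>^L\<close>
  with \<open>d\<^sub>k \<in> \<langle>r, s - r\<rangle>\<close> for \<open>k \<ge> 1\<close>, and tD consists of the elements of M lying below
  some \<open>t \<rho>^n\<close>.

  Every element of M lies below some \<open>k \<rho>^n\<close>, and \<open>k \<rho>^n \<le> r \<rho>^(n + k)\<close> because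
  \<open>r \<rho>^(n + 1) = s \<rho>^n \<ge> (r + 1) \<rho>^n\<close>; hence \<open>rD = M\<close>.

  On the other hand s lies in M but below no \<open>t \<rho>^n\<close> with \<open>t < r\<close>, for otherwise
  \<open>r (t \<rho>^n - s) = t s \<rho>^(n - 1) - r s\<close> would have an expansion. Clearing denominators and
  using \<open>gcd r s = 1\<close>, the top coefficient of such an expansion is divisible by r. Above degree
  \<open>n - 1\<close> it can be carried one degree down, since \<open>d \<rho>^(L + 1) = (d / r) s \<rho>^L\<close> and
  \<open>(d / r) s \<in> \<langle>r, s - r\<rangle>\<close>; in degree \<open>n - 1\<close> it cancels \<open>t s \<rho>^(n - 1)\<close> up to
  \<open>r t' \<rho>^(n - 1) = t' s \<rho>^(n - 2)\<close> with \<open>t' \<le> t\<close>. Descending to degree 0 leaves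
  \<open>d\<^sub>0 + r s = t s\<close>, which is impossible for \<open>t < r\<close>.
\<close>

lemma gen_monoid_of_nat_mult:
  "x \<in> gen_monoid S \<Longrightarrow> of_nat k * x \<in> gen_monoid (S :: 'a::semiring_1 set)"
  by (induction k) (auto simp: distrib_right intro: gen_monoid.add gen_monoid.zero)

lemma gen_monoid_pair_iff:
  "x \<in> gen_monoid {a, b :: nat} \<longleftrightarrow> (\<exists>i j. x = i * a + j * b)"
proof
  show "x \<in> gen_monoid {a, b} \<Longrightarrow> \<exists>i j. x = i * a + j * b"
  proof (induction rule: gen_monoid.induct)
    case zero
    show ?case by auto
  next
    case (gen x)
    then show ?case by (metis empty_iff insert_iff mult_1 mult_zero_left add_0 add_0_right)
  next
    case (add x y)
    then obtain i j i' j' where "x = i * a + j * b" "y = i' * a + j' * b" by blast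
    then have "x + y = (i + i') * a + (j + j') * b" by (simp add: algebra_simps)
    then show ?case by blast
  qed
  have "a \<in> gen_monoid {a, b}" "b \<in> gen_monoid {a, b}" by (auto intro: gen_monoid.gen)
  then show "\<exists>i j. x = i * a + j * b \<Longrightarrow> x \<in> gen_monoid {a, b}"
    using gen_monoid_of_nat_mult[of _ "{a, b}"] by (auto intro: gen_monoid.add)
qed

lemma leG_gen_monoid_refl: "leG (gen_monoid S) x x"
  by (simp add: leG_def gen_monoid.zero)

lemma leG_gen_monoid_add:
  "leG (gen_monoid S) a b \<Longrightarrow> leG (gen_monoid S) c d \<Longrightarrow> leG (gen_monoid S) (a + c) (b + d)"
  unfolding leG_def using gen_monoid.add[of "b - a" S "d - c"] by (simp add: algebra_simps)

lemma leG_gen_monoid_trans [trans]: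
  "leG (gen_monoid S) x y \<Longrightarrow> leG (gen_monoid S) y z \<Longrightarrow> leG (gen_monoid S) x z"
  using leG_gen_monoid_add[of S x y y z] by (simp add: leG_def)

lemma leG_gen_monoid_of_nat_mult:
  "leG (gen_monoid S) a b \<Longrightarrow> leG (gen_monoid S) (of_nat k * a) (of_nat k * (b :: 'a::ring_1))"
  unfolding leG_def using gen_monoid_of_nat_mult[of "b - a" S k] by (simp add: right_diff_distrib)

lemma int_mult_Suc: "1 \<le> t \<Longrightarrow> int_mult P (Suc t) X = int_sum P (int_mult P t X) X"
  by (cases t) auto

lemma int_mult_below_scale:
  fixes u :: "nat \<Rightarrow> 'a::ring_1" and S :: "'a set"
  assumes mem: "\<And>n. 1 \<le> n \<Longrightarrow> u n \<in> gen_monoid S"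
    and mono: "\<And>n m. 1 \<le> n \<Longrightarrow> n \<le> m \<Longrightarrow> leG (gen_monoid S) (u n) (u m)"
    and "1 \<le> t"
  shows "int_mult (gen_monoid S) t {x \<in> gen_monoid S. \<exists>n\<ge>1. leG (gen_monoid S) x (u n)}
    = {z \<in> gen_monoid S. \<exists>n\<ge>1. leG (gen_monoid S) z (of_nat t * u n)}"
  using \<open>1 \<le> t\<close>
proof (induction t rule: dec_induct)
  case base
  show ?case by simp
next
  case (step t)
  let ?M = "gen_monoid S"
  let ?D = "{x \<in> ?M. \<exists>n\<ge>1. leG ?M x (u n)}"
  have "int_sum ?M (int_mult ?M t ?D) ?D = {z \<in> ?M. \<exists>n\<ge>1. leG ?M z (of_nat (Suc t) * u n)}"
  proof (intro equalityI subsetI)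
    fix z assume "z \<in> int_sum ?M (int_mult ?M t ?D) ?D"
    then obtain x y n1 n2 where z: "z \<in> ?M" "leG ?M z (x + y)" and n: "1 \<le> n1" "1 \<le> n2"
      and x: "leG ?M x (of_nat t * u n1)" and y: "leG ?M y (u n2)"
      using step.IH by (auto simp: int_sum_def)
    define n where "n = max n1 n2"
    have "leG ?M z (x + y)" by (fact z(2))
    also have "leG ?M \<dots> (of_nat t * u n1 + u n2)"
      using x y by (rule leG_gen_monoid_add)
    also have "leG ?M \<dots> (of_nat t * u n + u n)"
      using n mono unfolding n_def by (intro leG_gen_monoid_add leG_gen_monoid_of_nat_mult) auto
    finally have "leG ?M z (of_nat (Suc t) * u n)" by (simp add: algebra_simps)
    moreover have "1 \<le> n" using n unfolding n_def by simp
    ultimately show "z \<in> {z \<in> ?M. \<exists>n\<ge>1. leG ?M z (of_nat (Suc t) * u n)}"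
      using z by blast
  next
    fix z assume "z \<in> {z \<in> ?M. \<exists>n\<ge>1. leG ?M z (of_nat (Suc t) * u n)}"
    then obtain n where z: "z \<in> ?M" "leG ?M z (of_nat t * u n + u n)" and "1 \<le> n"
      by (auto simp: algebra_simps)
    have "of_nat t * u n \<in> int_mult ?M t ?D"
      using step.IH mem \<open>1 \<le> n\<close> by (auto intro: gen_monoid_of_nat_mult leG_gen_monoid_refl)
    moreover have "u n \<in> ?D"
      using mem \<open>1 \<le> n\<close> by (auto intro: leG_gen_monoid_refl)
    ultimately show "z \<in> int_sum ?M (int_mult ?M t ?D) ?D"
      using z unfolding int_sum_def by blast
  qed
  then show ?case using step.hyps by (simp add: int_mult_Suc)
qed

locale coprime_ratio =
  fixes A :: "nat set" and r s :: nat
  assumes r_pos: "0 < r" and r_less_s: "r < s" and coprime_r_s: "coprime r s"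
begin

abbreviation ratio :: rat where "ratio \<equiv> of_nat s / of_nat r"

abbreviation coeffs :: "nat set" where "coeffs \<equiv> gen_monoid {r, s - r}"

abbreviation gens :: "rat set" where
  "gens \<equiv> {of_nat k / of_nat r | k. k \<in> A} \<union>
    {of_nat k' / of_nat r * ratio ^ n | k' n. k' \<in> coeffs \<and> n \<ge> 1}"

abbreviation M :: "rat set" where "M \<equiv> gen_monoid gens"

abbreviation expansion :: "(nat \<Rightarrow> nat) \<Rightarrow> nat \<Rightarrow> rat" where
  "expansion d L \<equiv> \<Sum>k\<le>L. of_nat (d k) * ratio ^ k"

lemma gensE:
  assumes "g \<in> gens"
  obtains a n where "g = of_nat a / of_nat r * ratio ^ n" and "1 \<le> n \<longrightarrow> a \<in> coeffs"
proof -
  from assms consider (A) a where "g = of_nat a / of_nat r"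
    | (coeffs) a n where "g = of_nat a / of_nat r * ratio ^ n" "a \<in> coeffs"
    by blast
  then show thesis
  proof cases
    case A
    then show thesis by (intro that[of a 0]) simp_all
  qed (use that in blast)
qed

lemma r_mult_ratio_pow_Suc: "of_nat r * ratio ^ Suc k = of_nat s * ratio ^ k"
  using r_pos by simp

lemma coeffs_expansion:
  assumes "x \<in> M"
  obtains d N where "\<forall>k\<ge>1. d k \<in> coeffs" and "\<forall>L\<ge>N. of_nat r * x = expansion d L"
proof -
  have "\<exists>d N. (\<forall>k\<ge>1. d k \<in> coeffs) \<and> (\<forall>L\<ge>N. of_nat r * x = expansion d L)"
    using assms
  proof (induction rule: gen_monoid.induct)
    case zero
    show ?case by (intro exI[of _ "\<lambda>_. 0"]) (simp add: gen_monoid.zero)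
  next
    case (gen g)
    then obtain a n where g: "g = of_nat a / of_nat r * ratio ^ n" and a: "1 \<le> n \<longrightarrow> a \<in> coeffs"
      by (rule gensE)
    define d where "d k = (if k = n then a else 0)" for k
    have "\<forall>k\<ge>1. d k \<in> coeffs" using a by (simp add: d_def gen_monoid.zero)
    moreover have "\<forall>L\<ge>n. of_nat r * g = expansion d L"
      using g r_pos by (simp add: d_def if_distrib[of of_nat] if_distrib[of "\<lambda>x. x * _"] cong: if_cong)
    ultimately show ?case by blast
  next
    case (add x y)
    then obtain dx Nx dy Ny where
      dx: "\<forall>k\<ge>1. dx k \<in> coeffs" "\<forall>L\<ge>Nx. of_nat r * x = expansion dx L" and
      dy: "\<forall>k\<ge>1. dy k \<in> coeffs" "\<forall>L\<ge>Ny. of_nat r * y = expansion dy L"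
      by blast
    define d where "d k = dx k + dy k" for k
    have "\<forall>k\<ge>1. d k \<in> coeffs" using dx dy by (simp add: d_def gen_monoid.add)
    moreover have "\<forall>L\<ge>max Nx Ny. of_nat r * (x + y) = expansion d L"
      using dx dy by (auto simp: d_def distrib_left distrib_right sum.distrib)
    ultimately show ?case by blast
  qed
  then show thesis using that by blast
qed

lemma ratio_pow_mem: "1 \<le> n \<Longrightarrow> ratio ^ n \<in> M"
proof -
  assume "1 \<le> n"
  moreover have "r \<in> coeffs" by (simp add: gen_monoid.gen)
  ultimately have "of_nat r / of_nat r * ratio ^ n \<in> M" by (blast intro: gen_monoid.gen)
  then show ?thesis using r_pos by simp
qed

lemma ratio_pow_le_Suc: "1 \<le> n \<Longrightarrow> leG M (ratio ^ n) (ratio ^ Suc n)"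
proof -
  assume "1 \<le> n"
  moreover have "s - r \<in> coeffs" by (simp add: gen_monoid.gen)
  ultimately have "of_nat (s - r) / of_nat r * ratio ^ n \<in> M" by (blast intro: gen_monoid.gen)
  moreover have "ratio ^ Suc n - ratio ^ n = of_nat (s - r) / of_nat r * ratio ^ n"
    using r_pos r_less_s by (simp add: of_nat_diff field_simps)
  ultimately show ?thesis by (simp add: leG_def)
qed

lemma ratio_pow_mono:
  assumes "1 \<le> n" and "n \<le> m"
  shows "leG M (ratio ^ n) (ratio ^ m)"
  using assms(2)
proof (induction m rule: dec_induct)
  case base
  show ?case by (rule leG_gen_monoid_refl)
next
  case (step m)
  then show ?case using ratio_pow_le_Suc[of m] assms(1) by (auto intro: leG_gen_monoid_trans)
qed

lemma Suc_r_ratio_pow_le: "1 \<le> n \<Longrightarrow> leG M (of_nat (Suc r) * ratio ^ n) (of_nat r * ratio ^ Suc n)"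
proof -
  assume "1 \<le> n"
  then have "of_nat (s - Suc r) * ratio ^ n \<in> M" by (intro gen_monoid_of_nat_mult ratio_pow_mem)
  moreover have "of_nat r * ratio ^ Suc n - of_nat (Suc r) * ratio ^ n = of_nat (s - Suc r) * ratio ^ n"
    using r_pos r_less_s by (simp add: of_nat_diff algebra_simps)
  ultimately show ?thesis by (simp add: leG_def)
qed

lemma multiple_le_r_ratio_pow:
  assumes "1 \<le> n"
  shows "leG M (of_nat k * ratio ^ n) (of_nat r * ratio ^ (n + k))"
proof (induction k)
  case 0
  have "of_nat r * ratio ^ n \<in> M" using assms by (intro gen_monoid_of_nat_mult ratio_pow_mem)
  then show ?case by (simp add: leG_def)
next
  case (Suc k)
  have "leG M (of_nat k * ratio ^ n + ratio ^ n) (of_nat r * ratio ^ (n + k) + ratio ^ (n + k))"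
    using Suc.IH ratio_pow_mono assms by (intro leG_gen_monoid_add) simp_all
  also have "leG M \<dots> (of_nat r * ratio ^ Suc (n + k))"
    using Suc_r_ratio_pow_le[of "n + k"] assms by (simp add: algebra_simps)
  finally show ?case by (simp add: algebra_simps)
qed

lemma le_multiple_of_ratio_pow:
  assumes "z \<in> M"
  shows "\<exists>k n. 1 \<le> n \<and> leG M z (of_nat k * ratio ^ n)"
  using assms
proof (induction rule: gen_monoid.induct)
  case zero
  show ?case by (intro exI[of _ 0] exI[of _ 1]) (simp add: leG_def gen_monoid.zero)
next
  case (gen g)
  then obtain a n where g: "g = of_nat a / of_nat r * ratio ^ n" by (rule gensE)
  have "of_nat a * ratio ^ Suc n = of_nat s * g" unfolding g by simp
  then have "of_nat a * ratio ^ Suc n - g = of_nat (s - 1) * g"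
    using r_less_s by (simp add: of_nat_diff algebra_simps)
  moreover have "of_nat (s - 1) * g \<in> M" using gen by (intro gen_monoid_of_nat_mult gen_monoid.gen)
  ultimately have "leG M g (of_nat a * ratio ^ Suc n)" by (simp add: leG_def)
  then show ?case by (intro exI[of _ a] exI[of _ "Suc n"]) simp
next
  case (add x y)
  then obtain kx nx ky ny where "1 \<le> nx" "leG M x (of_nat kx * ratio ^ nx)"
    and "1 \<le> ny" "leG M y (of_nat ky * ratio ^ ny)"
    by blast
  define n where "n = max nx ny"
  have "leG M (x + y) (of_nat kx * ratio ^ nx + of_nat ky * ratio ^ ny)"
    by (rule leG_gen_monoid_add) fact+
  also have "leG M \<dots> (of_nat kx * ratio ^ n + of_nat ky * ratio ^ n)"
    using \<open>1 \<le> nx\<close> \<open>1 \<le> ny\<close>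
    by (intro leG_gen_monoid_add leG_gen_monoid_of_nat_mult ratio_pow_mono) (simp_all add: n_def)
  finally have "leG M (x + y) (of_nat (kx + ky) * ratio ^ n)" by (simp add: algebra_simps)
  moreover have "1 \<le> n" using \<open>1 \<le> nx\<close> by (simp add: n_def)
  ultimately show ?case by blast
qed

lemma le_r_ratio_pow:
  assumes "z \<in> M"
  shows "\<exists>n\<ge>1. leG M z (of_nat r * ratio ^ n)"
proof -
  obtain k n where "1 \<le> n" and "leG M z (of_nat k * ratio ^ n)"
    using le_multiple_of_ratio_pow[OF assms] by blast
  then have "leG M z (of_nat r * ratio ^ (n + k))"
    using multiple_le_r_ratio_pow leG_gen_monoid_trans by blast
  then show ?thesis using \<open>1 \<le> n\<close> by (intro exI[of _ "n + k"]) simp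
qed

lemma ratio_pow_mult_r_pow: "k \<le> L \<Longrightarrow> ratio ^ k * of_nat r ^ L = of_nat s ^ k * of_nat r ^ (L - k)"
proof -
  assume "k \<le> L"
  then have "(of_nat r ^ L :: rat) = of_nat r ^ k * of_nat r ^ (L - k)" by (simp flip: power_add)
  then show ?thesis using r_pos by (simp add: power_divide)
qed

lemma coprime_int_r_s: "coprime (int r) (int s)"
  using coprime_r_s by simp

lemma r_dvd_top_coeff:
  fixes c :: "nat \<Rightarrow> int"
  assumes "1 \<le> L" and "(\<Sum>k\<le>L. of_int (c k) * ratio ^ k) = of_int z"
  shows "int r dvd c L"
proof -
  let ?cleared = "\<Sum>k\<le>L. c k * int s ^ k * int r ^ (L - k)"
  have "(of_int ?cleared :: rat) = (\<Sum>k\<le>L. of_int (c k) * (ratio ^ k * of_nat r ^ L))"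
    unfolding of_int_sum by (intro sum.cong refl) (simp add: ratio_pow_mult_r_pow)
  also have "\<dots> = (\<Sum>k\<le>L. of_int (c k) * ratio ^ k) * of_nat r ^ L"
    by (simp add: sum_distrib_right mult.assoc)
  also have "\<dots> = of_int (z * int r ^ L)"
    using assms(2) by simp
  finally have cleared: "?cleared = z * int r ^ L" by (simp only: of_int_eq_iff)
  have "int r dvd (\<Sum>k<L. c k * int s ^ k * int r ^ (L - k))"
    by (intro dvd_sum) simp
  moreover have "int r dvd ?cleared"
    using cleared assms(1) by (simp add: dvd_power)
  ultimately have "int r dvd c L * int s ^ L"
    by (simp add: lessThan_Suc_atMost[symmetric] dvd_add_right_iff)
  then show ?thesis using coprime_int_r_s by (simp add: coprime_dvd_mult_left_iff)
qed

lemma coprime_r_s_diff: "coprime r (s - r)"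
  using coprime_r_s r_less_s gcd_diff1_nat[of r s] by (simp add: coprime_iff_gcd_eq_1 gcd.commute)

lemma coeffs_div_r_mult_s:
  assumes "b \<in> coeffs" and "r dvd b"
  shows "b div r * s \<in> coeffs"
proof -
  obtain i j where b: "b = i * r + j * (s - r)" using assms(1) gen_monoid_pair_iff by blast
  have "r dvd j * (s - r)" using assms(2) b by (simp add: dvd_add_right_iff)
  then obtain j' where j: "j = r * j'" using coprime_r_s_diff coprime_dvd_mult_left_iff by blast
  obtain w where s: "s = r + w" using r_less_s less_imp_add_positive by blast
  have "b div r = i + j' * w" using b j s r_pos by (simp add: algebra_simps)
  then have "b div r * s = i * r + (i + j' * s) * (s - r)" using s by (simp add: algebra_simps)
  then show ?thesis using gen_monoid_pair_iff by blast
qed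

lemma coeffs_congruent_mult_s:
  assumes "d \<in> coeffs" and "int r dvd int d - t * int s" and "t < int r"
  obtains t' where "t' \<le> t" and "int d = t * int s - int r * t'"
proof -
  obtain i j where d: "d = i * r + j * (s - r)" using assms(1) gen_monoid_pair_iff by blast
  have s_minus_r: "int (s - r) = int s - int r" using r_less_s by simp
  have d_int: "int d = int i * int r + int j * (int s - int r)"
    by (simp only: d of_nat_add of_nat_mult s_minus_r)
  have "int d - t * int s = int r * (int i - int j) + (int j - t) * int s"
    unfolding d_int by (simp add: algebra_simps)
  then have "int r dvd (int j - t) * int s" using assms(2) by (simp add: dvd_add_right_iff)
  then have "int r dvd int j - t" using coprime_int_r_s by (simp add: coprime_dvd_mult_left_iff)
  then obtain m where m: "int j - t = int r * m" by blast
  have "0 < int r * (m + 1)" using m assms(3) by (simp add: algebra_simps)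
  then have "0 \<le> m" using r_pos zero_less_mult_pos by fastforce
  show thesis
  proof
    have "0 \<le> m * int (s - r)" using \<open>0 \<le> m\<close> by simp
    then show "t - int i - m * int (s - r) \<le> t" by simp
    show "int d = t * int s - int r * (t - int i - m * int (s - r))"
      unfolding d_int using m by (simp add: s_minus_r algebra_simps)
  qed
qed

lemma expansion_top_coeff_dvd:
  assumes "expansion d (Suc L) + of_nat r * of_nat s = of_int t * of_nat s * ratio ^ m"
    and "m \<le> Suc L"
  shows "int r dvd int (d (Suc L)) - (if m = Suc L then t * int s else 0)"
proof -
  define c where "c k = int (d k) - (if m = k then t * int s else 0)" for k
  have "(\<Sum>k\<le>Suc L. of_int (c k) * ratio ^ k) = expansion d (Suc L) - of_int t * of_nat s * ratio ^ m"
    using assms(2) by (simp add: c_def left_diff_distrib sum_subtractf if_distrib[of of_int]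
        if_distrib[of "\<lambda>x. x * _"] cong: if_cong)
  also have "\<dots> = of_int (- int r * int s)" using assms(1) by simp
  finally have "int r dvd c (Suc L)" by (rule r_dvd_top_coeff[rotated]) simp
  then show ?thesis by (simp only: c_def)
qed

lemma expansion_lower_target:
  assumes "\<forall>k\<ge>1. d k \<in> coeffs" and "t < int r"
    and eq: "expansion d (Suc L) + of_nat r * of_nat s = of_int t * of_nat s * ratio ^ Suc L"
  obtains t' where "t' \<le> t" and "expansion d L + of_nat r * of_nat s = of_int t' * of_nat s * ratio ^ L"
proof -
  have "d (Suc L) \<in> coeffs" using assms(1) by simp
  moreover have "int r dvd int (d (Suc L)) - t * int s"
    using expansion_top_coeff_dvd[OF eq] by simp
  ultimately obtain t' where "t' \<le> t" and d_top: "int (d (Suc L)) = t * int s - int r * t'"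
    using assms(2) by (rule coeffs_congruent_mult_s)
  have "(of_nat (d (Suc L)) :: rat) = of_int t * of_nat s - of_int t' * of_nat r"
    using arg_cong[OF d_top, of "of_int :: int \<Rightarrow> rat"] by (simp add: mult.commute)
  then have "of_nat (d (Suc L)) * ratio ^ Suc L
      = of_int t * of_nat s * ratio ^ Suc L - of_int t' * (of_nat r * ratio ^ Suc L)"
    by (simp only: left_diff_distrib mult.assoc)
  also have "\<dots> = of_int t * of_nat s * ratio ^ Suc L - of_int t' * of_nat s * ratio ^ L"
    by (simp only: r_mult_ratio_pow_Suc mult.assoc)
  finally have "expansion d L + of_nat r * of_nat s = of_int t' * of_nat s * ratio ^ L"
    using eq[unfolded sum.atMost_Suc] by linarith
  with \<open>t' \<le> t\<close> show thesis by (rule that)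
qed

lemma expansion_lower_degree:
  assumes "\<forall>k\<ge>1. d k \<in> coeffs" and "m \<le> L"
    and eq: "expansion d (Suc L) + of_nat r * of_nat s = of_int t * of_nat s * ratio ^ m"
  obtains d' where "\<forall>k\<ge>1. d' k \<in> coeffs" and "expansion d' L = expansion d (Suc L)"
proof -
  have "r dvd d (Suc L)" using expansion_top_coeff_dvd[OF eq] assms(2) by simp
  define e where "e = d (Suc L) div r"
  define d' where "d' k = d k + (if k = L then e * s else 0)" for k
  have "e * s \<in> coeffs" using coeffs_div_r_mult_s assms(1) \<open>r dvd d (Suc L)\<close> by (simp add: e_def)
  then have "\<forall>k\<ge>1. d' k \<in> coeffs" using assms(1) by (simp add: d'_def gen_monoid.add)
  moreover have "expansion d' L = expansion d (Suc L)"
  proof -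
    have "expansion d' L = expansion d L + of_nat e * (of_nat s * ratio ^ L)"
      by (simp add: d'_def distrib_right sum.distrib if_distrib[of of_nat]
          if_distrib[of "\<lambda>x. x * _"] mult.assoc cong: if_cong)
    also have "\<dots> = expansion d L + of_nat (e * r) * ratio ^ Suc L"
      by (simp only: r_mult_ratio_pow_Suc of_nat_mult mult.assoc)
    also have "e * r = d (Suc L)" using \<open>r dvd d (Suc L)\<close> by (simp add: e_def)
    finally show ?thesis by simp
  qed
  ultimately show thesis by (rule that)
qed

text \<open>The excluded equation says \<open>expansion d L = r (t \<rho>^(m + 1) - s)\<close>.\<close>

lemma no_coeffs_expansion:
  assumes "\<forall>k\<ge>1. d k \<in> coeffs" and "m \<le> L" and "t < int r"
  shows "expansion d L + of_nat r * of_nat s \<noteq> of_int t * of_nat s * ratio ^ m"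
  using assms
proof (induction L arbitrary: d m t)
  case 0
  have "of_int t * of_nat s < (of_nat r * of_nat s :: rat)"
    using 0 r_less_s by (simp add: mult_strict_right_mono)
  then show ?case using 0 by (simp add: add_strict_increasing)
next
  case (Suc L)
  show ?case
  proof
    assume eq: "expansion d (Suc L) + of_nat r * of_nat s = of_int t * of_nat s * ratio ^ m"
    show False
    proof (cases "m = Suc L")
      case True
      obtain t' where "t' \<le> t"
        and "expansion d L + of_nat r * of_nat s = of_int t' * of_nat s * ratio ^ L"
        using Suc.prems(1,3) eq[unfolded True] by (rule expansion_lower_target)
      then show False using Suc.IH[of d L t'] Suc.prems by simp
    next
      case False
      with Suc.prems have "m \<le> L" by simp
      obtain d' where "\<forall>k\<ge>1. d' k \<in> coeffs" and "expansion d' L = expansion d (Suc L)"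
        using Suc.prems(1) \<open>m \<le> L\<close> eq by (rule expansion_lower_degree)
      then show False using Suc.IH[of d' m t] eq \<open>m \<le> L\<close> Suc.prems(3) by simp
    qed
  qed
qed

lemma s_not_le_multiple_ratio_pow:
  assumes "1 \<le> n" and "t < r"
  shows "\<not> leG M (of_nat s) (of_nat t * ratio ^ n)"
proof
  assume "leG M (of_nat s) (of_nat t * ratio ^ n)"
  then obtain d N where d: "\<forall>k\<ge>1. d k \<in> coeffs"
    and d_expansion: "\<forall>L\<ge>N. of_nat r * (of_nat t * ratio ^ n - of_nat s) = expansion d L"
    unfolding leG_def by (rule coeffs_expansion)
  define L where "L = max N (n - 1)"
  have "expansion d L = of_nat r * (of_nat t * ratio ^ n - of_nat s)"
    using d_expansion[rule_format, of L] by (simp add: L_def)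
  also have "\<dots> = of_nat t * (of_nat r * ratio ^ Suc (n - 1)) - of_nat r * of_nat s"
    using assms(1) by (simp add: algebra_simps)
  also have "\<dots> = of_nat t * of_nat s * ratio ^ (n - 1) - of_nat r * of_nat s"
    by (simp only: r_mult_ratio_pow_Suc mult.assoc)
  finally have "expansion d L + of_nat r * of_nat s = of_nat t * of_nat s * ratio ^ (n - 1)"
    by simp
  then show False using no_coeffs_expansion[OF d, of "n - 1" L "int t"] assms(2) by (simp add: L_def)
qed

lemma s_mem: "of_nat s \<in> M"
proof -
  have "of_nat r * ratio ^ 1 \<in> M" by (intro gen_monoid_of_nat_mult ratio_pow_mem) simp
  then show ?thesis using r_pos by simp
qed

end

theorem proposition2p3:
  fixes p q r s :: nat
  assumes "1 < q" and "q < p - q" and "gcd p q = 1"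
    and "s \<in> gen_monoid {q, p - q}" and "s \<noteq> 0"
    and "1 < r" and "r < s - r" and "gcd r s = 1"
  defines "A \<equiv> gen_monoid {q, p - q}"
    and "B \<equiv> gen_monoid {r, s - r}"
  defines "M \<equiv> gen_monoid
      ({of_nat k / of_nat r | k. k \<in> A} \<union>
       {of_nat k' / of_nat r * (of_nat s / of_nat r) ^ n | k' n. k' \<in> B \<and> n \<ge> 1} :: rat set)"
  defines "D \<equiv> {x \<in> M. \<exists>n\<ge>1. leG M x ((of_nat s / of_nat r) ^ n)}"
  shows "(\<forall>t. 1 \<le> t \<and> t \<le> r - 1 \<longrightarrow> int_mult M t D \<noteq> M) \<and> int_mult M r D = M"
proof -
  have ratio: "coprime_ratio r s"
    using assms(6-8) by unfold_locales (auto simp: coprime_iff_gcd_eq_1)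
  have multiples: "int_mult M t D = {z \<in> M. \<exists>n\<ge>1. leG M z (of_nat t * (of_nat s / of_nat r) ^ n)}"
    if "1 \<le> t" for t
    unfolding M_def B_def D_def
    by (rule int_mult_below_scale[where u = "\<lambda>n. (of_nat s / of_nat r) ^ n"])
      (use that coprime_ratio.ratio_pow_mem[OF ratio] coprime_ratio.ratio_pow_mono[OF ratio] in auto)
  have s_not_mem: "of_nat s \<notin> int_mult M t D" if "1 \<le> t" and "t < r" for t
    using coprime_ratio.s_not_le_multiple_ratio_pow[OF ratio _ \<open>t < r\<close>] multiples[OF \<open>1 \<le> t\<close>]
    by (simp add: M_def B_def)
  have s_mem: "of_nat s \<in> M"
    unfolding M_def B_def by (rule coprime_ratio.s_mem[OF ratio])
  show ?thesis
  proof (intro conjI allI impI)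
    fix t assume t: "1 \<le> t \<and> t \<le> r - 1"
    then have "t < r" using assms(6) by linarith
    then show "int_mult M t D \<noteq> M" using s_not_mem s_mem t by blast
  next
    show "int_mult M r D = M"
      using coprime_ratio.le_r_ratio_pow[OF ratio] multiples[of r] assms(6)
      by (auto simp: M_def B_def)
  qed
qed

end
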